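(* Let $\mathcal C\subseteq\{0,1\}^n$ and $\mathcal D\subseteq\{0,1\}^m$ be neural codes, $q:\mathcal C\to\mathcal D$ a code map, and $\phi_q:R_\mathcal D\to R_\mathcal C$, $\phi_q(f)=f\circ q$, its pullback. Let $\tau:R[m]\to R[n]$ be the ring homomorphism with $\tau(x_i)=x_i$ if $i\le n$ and $\tau(x_i)=0$ if $i>n$, and view $R_\mathcal C$ as an $R[m]$-module via $r\cdot g=\tau(r)\cdot g$. Then $\phi_q$ is an $R[m]$-module homomorphism if and only if: 1. when $n>m$: $q(c)=(c_1,\dots,c_m)$ for all $c\in\mathcal C$ (deletion of the last $n-m$ neurons, possibly composed with an inclusion into $\mathcal D$); 2. when $n=m$: $q(c)=c$ for all $c\in\mathcal C$ (an inclusion map); 3. when $n<m$: $q(c)=(c_1,\dots,c_n,0,\dots,0)$ for all $c\in\mathcal C$ (adding $m-n$ neurons that are always $0$ to the end of each word, possibly composed with an inclusion into $\mathcal D$).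
   Context: For a code $\mathcal C\subseteq\{0,1\}^n$, $R_\mathcal C$ is the ring of all functions $\mathcal C\to\mathbb F_2$ (equivalently $\mathbb F_2[x_1,\dots,x_n]$ modulo the ideal of polynomials vanishing on $\mathcal C$). $R[n]=\mathbb F_2[x_1,\dots,x_n]/\langle x_i^2-x_i\rangle$, and $R_\mathcal C$ is an $R[n]$-module via $(r\cdot f)(c)=r(c)f(c)$. *)

theory Defs
  imports Main "HOL-Library.Z2" "HOL-Library.FuncSet"
begin

text \<open>Binary words of length n: the cube {0,1}^n, words as bool lists
  (True = 1, False = 0); the i-th neuron is list position i-1.\<close>
definition cube :: "nat \<Rightarrow> bool list set" where
  "cube n = {c. length c = n}"

definition neural_code :: "nat \<Rightarrow> bool list set \<Rightarrow> bool" where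
  "neural_code n C \<longleftrightarrow> C \<subseteq> cube n"

text \<open>R[n] = F2[x_1..x_n]/<x_i^2 - x_i> is identified (canonically) with R_{cube n},
  the polynomial x_i being the coordinate function c \<mapsto> c_i.\<close>
definition ring_of_code :: "bool list set \<Rightarrow> (bool list \<Rightarrow> bit) set" where
  "ring_of_code C = C \<rightarrow>\<^sub>E (UNIV :: bit set)"

definition Rn :: "nat \<Rightarrow> (bool list \<Rightarrow> bit) set" where
  "Rn n = ring_of_code (cube n)"

definition var :: "nat \<Rightarrow> nat \<Rightarrow> bool list \<Rightarrow> bit" where
  "var n i = restrict (\<lambda>c. if c ! (i - 1) then 1 else 0) (cube n)"

definition pullback :: "bool list set \<Rightarrow> (bool list \<Rightarrow> bool list) \<Rightarrow> (bool list \<Rightarrow> bit) \<Rightarrow> (bool list \<Rightarrow> bit)" where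
  "pullback C q f = restrict (f \<circ> q) C"

text \<open>tau : R[m] -> R[n], the ring homomorphism with tau(x_i) = x_i (i \<le> n), 0 (i > n).
  On functions: tau(r)(c) = r(c_1,...,c_m) when n \<ge> m, and r(c_1,...,c_n,0,...,0) when n < m.\<close>
definition pad :: "nat \<Rightarrow> nat \<Rightarrow> bool list \<Rightarrow> bool list" where
  "pad n m c = take m c @ replicate (m - n) False"

definition tau :: "nat \<Rightarrow> nat \<Rightarrow> (bool list \<Rightarrow> bit) \<Rightarrow> (bool list \<Rightarrow> bit)" where
  "tau n m r = restrict (\<lambda>c. r (pad n m c)) (cube n)"

definition act :: "bool list set \<Rightarrow> (bool list \<Rightarrow> bit) \<Rightarrow> (bool list \<Rightarrow> bit) \<Rightarrow> (bool list \<Rightarrow> bit)" where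
  "act C r f = restrict (\<lambda>c. r c * f c) C"

definition is_Rm_module_hom ::
  "nat \<Rightarrow> nat \<Rightarrow> bool list set \<Rightarrow> bool list set \<Rightarrow> ((bool list \<Rightarrow> bit) \<Rightarrow> (bool list \<Rightarrow> bit)) \<Rightarrow> bool" where
  "is_Rm_module_hom n m C D phi \<longleftrightarrow>
     (\<forall>f\<in>ring_of_code D. phi f \<in> ring_of_code C) \<and>
     (\<forall>f\<in>ring_of_code D. \<forall>g\<in>ring_of_code D.
        phi (restrict (\<lambda>d. f d + g d) D) = restrict (\<lambda>c. phi f c + phi g c) C) \<and>
     (\<forall>r\<in>Rn m. \<forall>f\<in>ring_of_code D. phi (act D r f) = act C (tau n m r) (phi f))"

lemma tau_var: "i \<in> {1..m} \<Longrightarrow> tau n m (var m i) = (if i \<le> n then var n i else restrict (\<lambda>_. 0) (cube n))"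
  by (auto simp: tau_def var_def pad_def cube_def nth_append fun_eq_iff)

end

theory Submission
  imports Defs
begin

text \<open>Both sides of the module condition are evaluated pointwise: at a word c of the
  code, pulling back r\<cdot>f gives r(q c) f(q c), while the twisted action gives
  r(pad c) f(q c). Taking f = 1 and r the indicator of the word q c in the cube
  shows that the condition forces q c = pad c; conversely it clearly suffices.
  Finally, pad is truncation, the identity, or padding with zeros according as
  n > m, n = m or n < m.\<close>

lemma pad_in_cube: "c \<in> cube n \<Longrightarrow> pad n m c \<in> cube m"
  by (auto simp: pad_def cube_def)

lemma pad_on_cube:
  assumes "c \<in> cube n"
  shows "pad n m c = (if n > m then take m c else if n = m then c else c @ replicate (m - n) False)"
  using assms by (auto simp: pad_def cube_def)

lemma pullback_in_ring_of_code: "pullback C q f \<in> ring_of_code C"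
  by (simp add: pullback_def ring_of_code_def)

lemma pullback_add:
  assumes "\<forall>c\<in>C. q c \<in> D"
  shows "pullback C q (restrict (\<lambda>d. f d + g d) D) = restrict (\<lambda>c. pullback C q f c + pullback C q g c) C"
  using assms by (auto simp: pullback_def fun_eq_iff)

lemma pullback_act_apply:
  assumes "q c \<in> D" "c \<in> C"
  shows "pullback C q (act D r f) c = r (q c) * f (q c)"
  using assms by (simp add: pullback_def act_def)

lemma act_tau_pullback_apply:
  assumes "c \<in> C" "C \<subseteq> cube n"
  shows "act C (tau n m r) (pullback C q f) c = r (pad n m c) * f (q c)"
  using assms by (auto simp: act_def tau_def pullback_def)

lemma pullback_act_eq_iff_pad:
  assumes C: "C \<subseteq> cube n" and D: "D \<subseteq> cube m" and q: "\<forall>c\<in>C. q c \<in> D"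
  shows "(\<forall>r\<in>Rn m. \<forall>f\<in>ring_of_code D. pullback C q (act D r f) = act C (tau n m r) (pullback C q f))
     \<longleftrightarrow> (\<forall>c\<in>C. q c = pad n m c)"
proof
  assume compat: "\<forall>r\<in>Rn m. \<forall>f\<in>ring_of_code D. pullback C q (act D r f) = act C (tau n m r) (pullback C q f)"
  show "\<forall>c\<in>C. q c = pad n m c"
  proof
    fix c assume c: "c \<in> C"
    define r where "r = restrict (\<lambda>d. if d = q c then (1::bit) else 0) (cube m)"
    define f where "f = restrict (\<lambda>d. (1::bit)) D"
    have "r \<in> Rn m" "f \<in> ring_of_code D"
      by (simp_all add: r_def f_def Rn_def ring_of_code_def)
    with compat have "pullback C q (act D r f) c = act C (tau n m r) (pullback C q f) c"
      by metis
    then have "r (q c) * f (q c) = r (pad n m c) * f (q c)"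
      using c q C by (simp add: pullback_act_apply act_tau_pullback_apply)
    moreover have "q c \<in> cube m" "pad n m c \<in> cube m"
      using c q C D by (auto intro: pad_in_cube)
    ultimately show "q c = pad n m c"
      using c q by (auto simp: r_def f_def split: if_splits)
  qed
next
  assume pad: "\<forall>c\<in>C. q c = pad n m c"
  show "\<forall>r\<in>Rn m. \<forall>f\<in>ring_of_code D. pullback C q (act D r f) = act C (tau n m r) (pullback C q f)"
  proof (intro ballI ext)
    fix r f c
    show "pullback C q (act D r f) c = act C (tau n m r) (pullback C q f) c"
    proof (cases "c \<in> C")
      case True
      then show ?thesis
        using pad q C by (simp add: pullback_act_apply act_tau_pullback_apply)
    qed (simp add: pullback_def act_def)
  qed
qed

lemma pullback_module_hom_iff_pad:
  assumes "C \<subseteq> cube n" and "D \<subseteq> cube m" and "\<forall>c\<in>C. q c \<in> D"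
  shows "is_Rm_module_hom n m C D (pullback C q) \<longleftrightarrow> (\<forall>c\<in>C. q c = pad n m c)"
  unfolding is_Rm_module_hom_def pullback_act_eq_iff_pad[OF assms]
  using pullback_in_ring_of_code pullback_add[OF assms(3)] by blast

theorem proposition1:
  fixes n m :: nat and C D :: "bool list set" and q :: "bool list \<Rightarrow> bool list"
  assumes "neural_code n C" and "neural_code m D"
    and "\<forall>c\<in>C. q c \<in> D"
  shows "is_Rm_module_hom n m C D (pullback C q) \<longleftrightarrow>
           ((n > m \<longrightarrow> (\<forall>c\<in>C. q c = take m c)) \<and>
            (n = m \<longrightarrow> (\<forall>c\<in>C. q c = c)) \<and>
            (n < m \<longrightarrow> (\<forall>c\<in>C. q c = c @ replicate (m - n) False)))"
proof -
  have C: "C \<subseteq> cube n" and D: "D \<subseteq> cube m"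
    using assms(1,2) by (auto simp: neural_code_def)
  have "\<And>c. c \<in> C \<Longrightarrow> pad n m c =
          (if n > m then take m c else if n = m then c else c @ replicate (m - n) False)"
    using C pad_on_cube by blast
  then show ?thesis
    unfolding pullback_module_hom_iff_pad[OF C D assms(3)]
    by (cases "n > m"; cases "n = m"; auto)
qed

end
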